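(* Let $T$ be a tree and $(I,R)$ a crosscut pair of $T$. Then at least one of the following holds: (i) there exists a vertex $v\in I$ such that all but one vertex of $N_T(v)$ are leaves of $T$; (ii) there exists an edge $e\in R$ which is a pendant edge of $T$. In particular, if $|I|$ is maximum among all crosscut pairs $(I,R)$ of $T$, then (i) holds.
   Context: For a graph $F$, $|F|$ is its number of edges and $F-I$ the subgraph induced on $V(F)\setminus I$. The crosscut number is $\sigma(F)=\min\{|I|+|F-I| : I\text{ independent in }F\}$. A crosscut pair of a tree $T$ is a pair $(I,R)$ with $I\subseteq V(T)$ independent in $T$, $R=T-I$ (the edge set of the subgraph induced on $V(T)\setminus I$), and $|I|+|R|=\sigma(T)$. A leaf is a vertex of degree $1$; an edge $uv$ is pendant if $\min\{d_T(u),d_T(v)\}=1$. *)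

theory Defs
  imports Main
begin

definition simple_graph :: "'a set \<Rightarrow> 'a set set \<Rightarrow> bool" where
  "simple_graph V E \<longleftrightarrow> finite V \<and> (\<forall>e\<in>E. \<exists>u v. e = {u, v} \<and> u \<noteq> v \<and> u \<in> V \<and> v \<in> V)"

definition adj :: "'a set set \<Rightarrow> 'a \<Rightarrow> 'a \<Rightarrow> bool" where
  "adj E u v \<longleftrightarrow> {u, v} \<in> E"

definition neighbours :: "'a set set \<Rightarrow> 'a \<Rightarrow> 'a set" where
  "neighbours E v = {u. {u, v} \<in> E}"

definition degree :: "'a set set \<Rightarrow> 'a \<Rightarrow> nat" where
  "degree E v = card (neighbours E v)"

definition connected_graph :: "'a set \<Rightarrow> 'a set set \<Rightarrow> bool" where
  "connected_graph V E \<longleftrightarrow> V \<noteq> {} \<and> (\<forall>u\<in>V. \<forall>v\<in>V. (adj E)\<^sup>*\<^sup>* u v)"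

definition is_cycle :: "'a set set \<Rightarrow> 'a list \<Rightarrow> bool" where
  "is_cycle E cs \<longleftrightarrow> length cs \<ge> 3 \<and> distinct cs \<and>
     (\<forall>i. Suc i < length cs \<longrightarrow> adj E (cs ! i) (cs ! Suc i)) \<and> adj E (last cs) (hd cs)"

definition tree :: "'a set \<Rightarrow> 'a set set \<Rightarrow> bool" where
  "tree V E \<longleftrightarrow> simple_graph V E \<and> connected_graph V E \<and> (\<nexists>cs. is_cycle E cs)"

definition independent :: "'a set \<Rightarrow> 'a set set \<Rightarrow> 'a set \<Rightarrow> bool" where
  "independent V E I \<longleftrightarrow> I \<subseteq> V \<and> (\<forall>u\<in>I. \<forall>v\<in>I. {u, v} \<notin> E)"

text \<open>Edge set of F - I, the subgraph induced on V \ I.\<close>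
definition remove_vertices :: "'a set set \<Rightarrow> 'a set \<Rightarrow> 'a set set" where
  "remove_vertices E I = {e \<in> E. e \<inter> I = {}}"

definition crosscut_number :: "'a set \<Rightarrow> 'a set set \<Rightarrow> nat" where
  "crosscut_number V E = Min {card I + card (remove_vertices E I) | I. independent V E I}"

definition crosscut_pair :: "'a set \<Rightarrow> 'a set set \<Rightarrow> 'a set \<Rightarrow> 'a set set \<Rightarrow> bool" where
  "crosscut_pair V E I R \<longleftrightarrow> independent V E I \<and> R = remove_vertices E I \<and>
     card I + card R = crosscut_number V E"

definition leaf :: "'a set set \<Rightarrow> 'a \<Rightarrow> bool" where
  "leaf E v \<longleftrightarrow> degree E v = 1"

definition pendant_edge :: "'a set set \<Rightarrow> 'a set \<Rightarrow> bool" where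
  "pendant_edge E e \<longleftrightarrow> e \<in> E \<and> (\<exists>u v. e = {u, v} \<and> min (degree E u) (degree E v) = 1)"

text \<open>(i): some v in I such that all but (at most) one vertex of N(v) are leaves.\<close>
definition cond_i :: "'a set set \<Rightarrow> 'a set \<Rightarrow> bool" where
  "cond_i E I \<longleftrightarrow> (\<exists>v\<in>I. \<exists>u\<in>neighbours E v. \<forall>w\<in>neighbours E v. w \<noteq> u \<longrightarrow> leaf E w)"

definition cond_ii :: "'a set set \<Rightarrow> 'a set set \<Rightarrow> bool" where
  "cond_ii E R \<longleftrightarrow> (\<exists>e\<in>R. pendant_edge E e)"

end

theory Submission
  imports Defs
begin

(* Take a longest path x0 x1 x2 ... in the tree. Its end x0 is a leaf, and every neighbour of x1
   other than x2 is a leaf as well, since otherwise the path could be prolonged or would close a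
   cycle. If the pendant edge x0x1 survives in R we have (ii); otherwise x0 or x1 lies in I, and
   either vertex witnesses (i). If (ii) holds with a pendant edge ab, a a leaf, then
   (I + a, R - ab) is again a crosscut pair, so |I| was not maximum. *)

lemma simple_graph_edgeD:
  assumes "simple_graph V E" "{x, y} \<in> E"
  shows "x \<noteq> y" "x \<in> V" "y \<in> V"
proof -
  obtain u v where "{x, y} = {u, v}" "u \<noteq> v" "u \<in> V" "v \<in> V"
    using assms unfolding simple_graph_def by blast
  then show "x \<noteq> y" "x \<in> V" "y \<in> V" by (auto simp: doubleton_eq_iff)
qed

lemma finite_neighbours:
  assumes "simple_graph V E"
  shows "finite (neighbours E v)"
proof (rule finite_subset)
  show "neighbours E v \<subseteq> V"
    using simple_graph_edgeD[OF assms] unfolding neighbours_def by blast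
  show "finite V" using assms unfolding simple_graph_def by blast
qed

lemma finite_edges:
  assumes "simple_graph V E"
  shows "finite E"
proof (rule finite_subset)
  show "E \<subseteq> Pow V"
  proof
    fix e assume "e \<in> E"
    then obtain u v where "e = {u, v}" "u \<in> V" "v \<in> V"
      using assms unfolding simple_graph_def by blast
    then show "e \<in> Pow V" by simp
  qed
  show "finite (Pow V)" using assms unfolding simple_graph_def by blast
qed

lemma neighbours_leaf:
  assumes "leaf E a" "{a, b} \<in> E"
  shows "neighbours E a = {b}"
proof -
  obtain c where "neighbours E a = {c}"
    using assms(1) unfolding leaf_def degree_def by (metis card_1_singletonE)
  moreover have "b \<in> neighbours E a"
    using assms(2) unfolding neighbours_def by (simp add: insert_commute)
  ultimately show ?thesis by simp
qed

lemma neighbours_eq_singletonD: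
  assumes "neighbours E a = {b}"
  shows "{a, b} \<in> E"
proof -
  have "b \<in> neighbours E a" using assms by simp
  then show ?thesis unfolding neighbours_def by (simp add: insert_commute)
qed

lemma connected_graph_has_edge:
  assumes "connected_graph V E" "finite V" "card V \<ge> 2"
  shows "\<exists>a b. {a, b} \<in> E"
proof -
  have "\<not> card V \<le> Suc 0" using assms(3) by simp
  then obtain a b where ab: "a \<in> V" "b \<in> V" "a \<noteq> b"
    using card_le_Suc0_iff_eq[OF assms(2)] by blast
  then have "(adj E)\<^sup>*\<^sup>* a b" using assms(1) unfolding connected_graph_def by blast
  then show ?thesis using ab(3)
    by (cases rule: converse_rtranclpE) (auto simp: adj_def)
qed

definition graph_path :: "'a set set \<Rightarrow> 'a list \<Rightarrow> bool" where
  "graph_path E xs \<longleftrightarrow> distinct xs \<and> (\<forall>i. Suc i < length xs \<longrightarrow> {xs ! i, xs ! Suc i} \<in> E)"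

definition longest_path :: "'a set \<Rightarrow> 'a set set \<Rightarrow> 'a list \<Rightarrow> bool" where
  "longest_path V E xs \<longleftrightarrow> graph_path E xs \<and> set xs \<subseteq> V \<and>
     (\<forall>ys. graph_path E ys \<and> set ys \<subseteq> V \<longrightarrow> length ys \<le> length xs)"

lemma graph_path_drop: "graph_path E xs \<Longrightarrow> graph_path E (drop n xs)"
  unfolding graph_path_def by simp

lemma is_cycle_take_graph_path:
  assumes "graph_path E xs" "2 \<le> j" "j < length xs" "{xs ! j, xs ! 0} \<in> E"
  shows "is_cycle E (take (Suc j) xs)"
proof -
  have "take (Suc j) xs \<noteq> []" using assms(3) by auto
  then have "last (take (Suc j) xs) = xs ! j" "hd (take (Suc j) xs) = xs ! 0"
    using assms(3) by (simp_all add: last_conv_nth hd_conv_nth)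
  then show ?thesis
    using assms unfolding is_cycle_def graph_path_def adj_def by auto
qed

lemma longest_path_exists:
  assumes "simple_graph V E" "{a, b} \<in> E"
  obtains xs where "longest_path V E xs" "2 \<le> length xs"
proof -
  let ?P = "\<lambda>ys. graph_path E ys \<and> set ys \<subseteq> V"
  have "a \<noteq> b" "a \<in> V" "b \<in> V" using simple_graph_edgeD[OF assms] by blast+
  then have ab: "?P [a, b]" using assms(2) unfolding graph_path_def by (simp add: less_Suc_eq)
  have "length ys < Suc (card V)" if "?P ys" for ys
  proof -
    have "finite V" using assms(1) unfolding simple_graph_def by blast
    have "length ys = card (set ys)" using that unfolding graph_path_def by (simp add: distinct_card)
    also have "\<dots> \<le> card V" using card_mono[OF \<open>finite V\<close>] that by blast
    finally show ?thesis by simp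
  qed
  then obtain xs where "?P xs" "\<forall>ys. ?P ys \<longrightarrow> length ys \<le> length xs"
    using Lattices_Big.ex_has_greatest_nat[of ?P "[a, b]" length] ab by blast
  moreover from this have "2 \<le> length xs" using ab by fastforce
  ultimately show ?thesis using that unfolding longest_path_def by blast
qed

context
  fixes V :: "'a set" and E :: "'a set set"
  assumes simple: "simple_graph V E" and acyclic: "\<nexists>cs. is_cycle E cs"
begin

lemma longest_path_hd_neighbours:
  assumes xs: "longest_path V E xs" "2 \<le> length xs"
  shows "neighbours E (xs ! 0) = {xs ! 1}"
proof -
  have p: "graph_path E xs" "set xs \<subseteq> V" using xs unfolding longest_path_def by auto
  have "y = xs ! 1" if e: "{y, xs ! 0} \<in> E" for y
  proof (cases "y \<in> set xs")
    case False
    have "graph_path E (y # xs)"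
      using p(1) False e unfolding graph_path_def by (auto simp: nth_Cons split: nat.splits)
    moreover have "set (y # xs) \<subseteq> V" using p(2) simple_graph_edgeD[OF simple e] by simp
    ultimately have "length (y # xs) \<le> length xs" using xs unfolding longest_path_def by blast
    then show ?thesis by simp
  next
    case True
    then obtain j where j: "j < length xs" "y = xs ! j" by (auto simp: in_set_conv_nth)
    have "j \<noteq> 0" using simple_graph_edgeD(1)[OF simple e] j by (cases j) auto
    moreover have "\<not> 2 \<le> j"
      using is_cycle_take_graph_path[OF p(1) _ j(1)] e j acyclic by blast
    ultimately show ?thesis using j by (simp add: numeral_2_eq_2 not_less_eq_eq le_Suc_eq)
  qed
  moreover have "{xs ! 0, xs ! 1} \<in> E" using p(1) xs(2) unfolding graph_path_def by auto
  ultimately show ?thesis unfolding neighbours_def by (auto simp: insert_commute)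
qed

text \<open>The end of a longest path is a leaf; applying this to the longest path obtained by
  replacing the end with another neighbour w of the second vertex shows that w is a leaf too.\<close>

lemma longest_path_neighbour_leaf:
  assumes xs: "longest_path V E xs" "2 \<le> length xs"
    and w: "w \<in> neighbours E (xs ! 1)" "3 \<le> length xs \<longrightarrow> w \<noteq> xs ! 2"
  shows "leaf E w"
proof -
  have p: "graph_path E xs" "set xs \<subseteq> V" using xs unfolding longest_path_def by auto
  have e: "{w, xs ! 1} \<in> E" using w(1) unfolding neighbours_def by simp
  show ?thesis
  proof (cases "w \<in> set xs")
    case False
    let ?ys = "w # drop 1 xs"
    have "graph_path E ?ys"
      using graph_path_drop[OF p(1), of 1] False e xs(2) unfolding graph_path_def
      by (auto simp: nth_Cons split: nat.splits dest: in_set_dropD)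
    moreover have "set ?ys \<subseteq> V"
      using p(2) simple_graph_edgeD[OF simple e] set_drop_subset by fastforce
    moreover have "length ?ys = length xs" using xs(2) by simp
    ultimately have "longest_path V E ?ys" using xs(1) unfolding longest_path_def by simp
    from longest_path_hd_neighbours[OF this] have "neighbours E w = {xs ! 1}"
      using xs(2) by simp
    then show ?thesis unfolding leaf_def degree_def by simp
  next
    case True
    then obtain j where j: "j < length xs" "w = xs ! j" by (auto simp: in_set_conv_nth)
    show ?thesis
    proof (cases "j = 0")
      case True
      then show ?thesis
        using longest_path_hd_neighbours[OF xs] j unfolding leaf_def degree_def by simp
    next
      case False
      moreover have "j \<noteq> 1" using simple_graph_edgeD(1)[OF simple e] j by auto
      moreover have "j \<noteq> 2" using w(2) j by auto
      ultimately have "2 \<le> j - 1" by simp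
      then have "is_cycle E (take (Suc (j - 1)) (drop 1 xs))"
        using is_cycle_take_graph_path[OF graph_path_drop[OF p(1)], of "j - 1" 1] j e by simp
      then show ?thesis using acyclic by blast
    qed
  qed
qed

lemma leaf_with_leafy_neighbour:
  assumes "{a, b} \<in> E"
  shows "\<exists>l p. neighbours E l = {p} \<and> cond_i E {p}"
proof -
  obtain xs where xs: "longest_path V E xs" "2 \<le> length xs"
    using longest_path_exists[OF simple assms] .
  have p: "graph_path E xs" using xs unfolding longest_path_def by auto
  define u where "u = (if 3 \<le> length xs then xs ! 2 else xs ! 0)"
  have "{xs ! 1, u} \<in> E"
    using p xs(2) unfolding u_def graph_path_def
    by (auto simp: numeral_2_eq_2 numeral_3_eq_3 insert_commute)
  then have "u \<in> neighbours E (xs ! 1)" unfolding neighbours_def by (simp add: insert_commute)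
  moreover have "\<forall>w\<in>neighbours E (xs ! 1). w \<noteq> u \<longrightarrow> leaf E w"
    using longest_path_neighbour_leaf[OF xs] unfolding u_def by auto
  ultimately show ?thesis
    using longest_path_hd_neighbours[OF xs] unfolding cond_i_def by blast
qed

end

lemma pendant_edgeE:
  assumes "pendant_edge E e"
  obtains a b where "e = {a, b}" "leaf E a"
proof -
  obtain x y where "e = {x, y}" "min (degree E x) (degree E y) = 1"
    using assms unfolding pendant_edge_def by blast
  then show ?thesis using that unfolding leaf_def by (metis insert_commute min_def)
qed

lemma pendant_edge_if_neighbours_eq_singleton:
  assumes "simple_graph V E" "neighbours E l = {p}"
  shows "pendant_edge E {l, p}"
proof -
  have lp: "{l, p} \<in> E" using neighbours_eq_singletonD[OF assms(2)] .
  then have "neighbours E p \<noteq> {}" unfolding neighbours_def by blast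
  then have "degree E p \<ge> 1"
    using finite_neighbours[OF assms(1)] unfolding degree_def by (simp add: Suc_le_eq card_gt_0_iff)
  moreover have "degree E l = 1" using assms(2) unfolding degree_def by simp
  ultimately have "min (degree E l) (degree E p) = 1" by simp
  then show ?thesis using lp unfolding pendant_edge_def by blast
qed

lemma crosscut_pair_cond_i_or_cond_ii:
  assumes "tree V E" "card V \<ge> 2" "crosscut_pair V E I R"
  shows "cond_i E I \<or> cond_ii E R"
proof -
  have simple: "simple_graph V E" and acyclic: "\<nexists>cs. is_cycle E cs"
    using assms(1) unfolding tree_def by blast+
  have "connected_graph V E" "finite V"
    using assms(1) unfolding tree_def simple_graph_def by blast+
  then obtain a b where "{a, b} \<in> E" using connected_graph_has_edge assms(2) by blast
  then obtain l p where lp: "neighbours E l = {p}" "cond_i E {p}"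
    using leaf_with_leafy_neighbour[OF simple acyclic] by blast
  have R: "R = remove_vertices E I" using assms(3) unfolding crosscut_pair_def by blast
  have "{l, p} \<in> E" using neighbours_eq_singletonD[OF lp(1)] .
  then consider "{l, p} \<in> R" | "l \<in> I" | "p \<in> I"
    using R unfolding remove_vertices_def by blast
  then show ?thesis
  proof cases
    case 1
    then show ?thesis
      using pendant_edge_if_neighbours_eq_singleton[OF simple lp(1)] unfolding cond_ii_def by blast
  next
    case 2
    then have "cond_i E {l}" using lp(1) unfolding cond_i_def by simp
    then show ?thesis using 2 unfolding cond_i_def by blast
  next
    case 3
    then show ?thesis using lp(2) unfolding cond_i_def by blast
  qed
qed

lemma independent_insert_leaf:
  assumes "simple_graph V E" "independent V E I" "neighbours E a = {b}" "b \<notin> I"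
  shows "independent V E (insert a I)"
proof -
  have "{a, b} \<in> E" using neighbours_eq_singletonD[OF assms(3)] .
  then have "a \<in> V" "{a, a} \<notin> E" using simple_graph_edgeD[OF assms(1)] by blast+
  moreover have "{a, t} \<notin> E" "{t, a} \<notin> E" if "t \<in> I" for t
    using assms(3,4) that unfolding neighbours_def by (auto simp: insert_commute)
  ultimately show ?thesis using assms(2) unfolding independent_def by auto
qed

lemma remove_vertices_insert_leaf:
  assumes "simple_graph V E" "neighbours E a = {b}"
  shows "remove_vertices E (insert a I) = remove_vertices E I - {{a, b}}"
proof -
  have "f = {a, b}" if f: "f \<in> E" "a \<in> f" for f
  proof -
    obtain u v where "f = {u, v}" using f(1) assms(1) unfolding simple_graph_def by blast
    then obtain z where z: "f = {a, z}" using f(2) by (auto simp: insert_commute)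
    then have "z \<in> neighbours E a" using f(1) unfolding neighbours_def by (simp add: insert_commute)
    then show ?thesis using z assms(2) by simp
  qed
  then show ?thesis unfolding remove_vertices_def by auto
qed

lemma crosscut_pair_insert_leaf:
  assumes "simple_graph V E" "crosscut_pair V E I R" "{a, b} \<in> R" "leaf E a"
  shows "crosscut_pair V E (insert a I) (R - {{a, b}})"
proof -
  have ind: "independent V E I" and R: "R = remove_vertices E I"
    and sum: "card I + card R = crosscut_number V E"
    using assms(2) unfolding crosscut_pair_def by auto
  have ab: "{a, b} \<in> E" "a \<notin> I" "b \<notin> I" using assms(3) R unfolding remove_vertices_def by auto
  have Na: "neighbours E a = {b}" using neighbours_leaf[OF assms(4) ab(1)] .
  have "finite I" using ind assms(1) finite_subset unfolding independent_def simple_graph_def by blast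
  moreover have "finite R" using finite_edges[OF assms(1)] R unfolding remove_vertices_def by simp
  ultimately have "card (insert a I) = Suc (card I)" "Suc (card (R - {{a, b}})) = card R"
    using ab(2) assms(3) card.remove[of R "{a, b}"] by (simp_all del: card_Diff_insert)
  then show ?thesis
    using independent_insert_leaf[OF assms(1) ind Na ab(3)] remove_vertices_insert_leaf[OF assms(1) Na]
      R sum unfolding crosscut_pair_def by auto
qed

lemma crosscut_pair_max_card_not_cond_ii:
  assumes "simple_graph V E" "crosscut_pair V E I R"
    and max: "\<forall>I' R'. crosscut_pair V E I' R' \<longrightarrow> card I' \<le> card I"
  shows "\<not> cond_ii E R"
proof
  assume "cond_ii E R"
  then obtain a b where ab: "{a, b} \<in> R" "leaf E a"
    unfolding cond_ii_def by (metis pendant_edgeE)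
  have R: "R = remove_vertices E I" using assms(2) unfolding crosscut_pair_def by blast
  have "finite I" "a \<notin> I"
    using assms(1,2) ab(1) R finite_subset
    unfolding crosscut_pair_def independent_def simple_graph_def remove_vertices_def by auto
  then have "card I < card (insert a I)" by simp
  moreover have "card (insert a I) \<le> card I"
    using max crosscut_pair_insert_leaf[OF assms(1,2) ab] by blast
  ultimately show False by simp
qed

theorem proposition2p6:
  fixes V :: "'a set" and E :: "'a set set" and I :: "'a set" and R :: "'a set set"
  assumes "tree V E" and "card V \<ge> 2"
    and "crosscut_pair V E I R"
  shows "(cond_i E I \<or> cond_ii E R) \<and>
         ((\<forall>I' R'. crosscut_pair V E I' R' \<longrightarrow> card I' \<le> card I) \<longrightarrow> cond_i E I)"
proof -
  have "simple_graph V E" using assms(1) unfolding tree_def by blast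
  then show ?thesis
    using crosscut_pair_cond_i_or_cond_ii[OF assms] crosscut_pair_max_card_not_cond_ii[OF _ assms(3)]
    by blast
qed

end
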